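(* Let $G$ be a network whose underlying graph is a tree (connected, simple, without circuits, at most countable, locally finite), with edges $\mathsf{e}_i$, $i\in\mathbf{E}\subset\mathbb{N}$, parametrized by arc length $x_i\in[0,\ell_i]$ via $\pi_i$, and let $0\in\mathbf{E}$ index a distinguished edge $\mathsf{e}_0$. Consider (BBMG) on $G$ with all $d_i=0$, i.e. $$\partial_tu_i-a_i\partial_i^2\partial_tu_i+b_iu_i\partial_iu_i=0\ \text{on }\mathsf{e}_i,\ t>0;\qquad u_j(t,\mathsf{v}_k)=u_h(t,\mathsf{v}_k),\ \ \sum_{j}\iota_{kj}a_j\partial_ju_j(t,\mathsf{v}_k)=0$$ for all $\mathsf{v}_k\in V_r$, $j,h\in N(\mathsf{v}_k)$, $t\ge0$, where $a_i>0$, $b_i\in\mathbb{R}\setminus\{0\}$. Assume $$\sqrt{\frac{a_i}{a_j}}=\frac{b_i}{b_j}>0\quad\text{for all }\mathsf{v}_k\in V_r\text{ and all }i,j\in N(\mathsf{v}_k),\qquad \sum_{i\in\mathbf{E}}\iota_{ki}b_i=0\quad\text{for all }\mathsf{v}_k\in V_r.$$ Let $c_0>0$ and let the speeds $c_i>0$ be determined by $c_i=\sqrt{a_i/a_j}\,c_j$ for all $\mathsf{v}_k\in V_r$ and $i,j\in N(\mathsf{v}_k)$; let the constants $\tau_i$ be determined by $\tau_0=0$ and $$\frac{\tau_i+\varepsilon_{ki}}{\sqrt{a_i}}=\frac{\tau_j+\varepsilon_{kj}}{\sqrt{a_j}}\quad\text{for all }\mathsf{v}_k\in V_r,\ i,j\in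 N(\mathsf{v}_k),$$ where $\varepsilon_{ki}=\ell_i$ if $\pi_i(\ell_i)=\mathsf{v}_k$ and $\varepsilon_{ki}=0$ if $\pi_i(0)=\mathsf{v}_k$. Then the function $u$ defined on each edge by $u_i(t,x_i)=\varphi_i(x_i-c_it+\tau_i)$, with $$\varphi_i(z)=\frac{6c_i}{b_i}\cdot\frac{1}{1+\cosh\big(z/\sqrt{a_i}\big)},\qquad z\in\mathbb{R},$$ is a strong solution of (BBMG).
   Context: For a vertex $\mathsf{v}$, $N(\mathsf{v})$ is the set of indices of edges incident to $\mathsf{v}$; $V_r$ is the set of vertices of degree $\ge 2$. Incidence numbers: $\iota_{ki}=1$ if $\pi_i(\ell_i)=\mathsf{v}_k$, $\iota_{ki}=-1$ if $\pi_i(0)=\mathsf{v}_k$, $0$ otherwise. $u_i(x_i,t)=u(\pi_i(x_i),t)$, $\partial_i=\partial/\partial x_i$, and values at $\mathsf{v}_k$ mean values at $x_i=\pi_i^{-1}(\mathsf{v}_k)$. No initial conditions and no conditions at degree-one vertices are imposed. A strong solution is a function continuous on $G$ with $u_i\in\mathcal{C}^{1,1}(\mathsf{e}_i\times[0,\infty))$, $\partial_tu_i\in\mathcal{C}^{2,0}(\mathsf{e}_i\times[0,\infty))$, satisfying the system pointwise. The profile $\varphi_i$ is the solitary wave $\frac{6(c-d)}{b}(1+\cosh(\sqrt{(c-d)/(ac)}\,z))^{-1}$ with $a=a_i,b=b_i,c=c_i,d=0$. *)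

theory Defs
  imports "HOL-Analysis.Analysis"
begin

text \<open>A network: vertex set V, edges indexed by E (a set of naturals); edge i is
  parametrised by x_i in [0, l i], with initial vertex src i = pi_i(0) and
  terminal vertex tgt i = pi_i(l i).\<close>

definition incident :: "nat set \<Rightarrow> (nat \<Rightarrow> 'v) \<Rightarrow> (nat \<Rightarrow> 'v) \<Rightarrow> 'v \<Rightarrow> nat set" where
  "incident E src tgt v = {i \<in> E. src i = v \<or> tgt i = v}"

definition ramif :: "'v set \<Rightarrow> nat set \<Rightarrow> (nat \<Rightarrow> 'v) \<Rightarrow> (nat \<Rightarrow> 'v) \<Rightarrow> 'v set" where
  "ramif V E src tgt = {v \<in> V. card (incident E src tgt v) \<ge> 2}"

definition iota :: "(nat \<Rightarrow> 'v) \<Rightarrow> (nat \<Rightarrow> 'v) \<Rightarrow> 'v \<Rightarrow> nat \<Rightarrow> real" where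
  "iota src tgt v i = (if tgt i = v then 1 else if src i = v then -1 else 0)"

text \<open>eps v i = l i if pi_i(l i) = v and 0 if pi_i(0) = v; this is also the
  parameter value x_i = pi_i^{-1}(v) of the vertex v on edge i.\<close>
definition eps :: "(nat \<Rightarrow> 'v) \<Rightarrow> (nat \<Rightarrow> real) \<Rightarrow> 'v \<Rightarrow> nat \<Rightarrow> real" where
  "eps tgt l v i = (if tgt i = v then l i else 0)"

definition adj_rel :: "nat set \<Rightarrow> (nat \<Rightarrow> 'v) \<Rightarrow> (nat \<Rightarrow> 'v) \<Rightarrow> ('v \<times> 'v) set" where
  "adj_rel E src tgt = {(src i, tgt i) | i. i \<in> E} \<union> {(tgt i, src i) | i. i \<in> E}"

definition has_circuit :: "nat set \<Rightarrow> (nat \<Rightarrow> 'v) \<Rightarrow> (nat \<Rightarrow> 'v) \<Rightarrow> bool" where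
  "has_circuit E src tgt \<longleftrightarrow> (\<exists>es vs. es \<noteq> [] \<and> distinct es \<and> set es \<subseteq> E \<and>
     length vs = Suc (length es) \<and> vs ! 0 = vs ! length es \<and>
     (\<forall>k < length es. (src (es ! k) = vs ! k \<and> tgt (es ! k) = vs ! Suc k) \<or>
                       (tgt (es ! k) = vs ! k \<and> src (es ! k) = vs ! Suc k)))"

definition tree_network :: "'v set \<Rightarrow> nat set \<Rightarrow> (nat \<Rightarrow> 'v) \<Rightarrow> (nat \<Rightarrow> 'v) \<Rightarrow> (nat \<Rightarrow> real) \<Rightarrow> bool" where
  "tree_network V E src tgt l \<longleftrightarrow>
     V \<noteq> {} \<and> countable V \<and>
     (\<forall>i\<in>E. src i \<in> V \<and> tgt i \<in> V \<and> l i > 0) \<and>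
     (\<forall>i\<in>E. src i \<noteq> tgt i) \<and>
     (\<forall>i\<in>E. \<forall>j\<in>E. {src i, tgt i} = {src j, tgt j} \<longrightarrow> i = j) \<and>
     (\<forall>v\<in>V. finite (incident E src tgt v)) \<and>
     (\<forall>v\<in>V. \<forall>w\<in>V. (v, w) \<in> (adj_rel E src tgt)\<^sup>*) \<and>
     \<not> has_circuit E src tgt"

text \<open>Strong solution of (BBMG) with all d_i = 0. u i x t = u_i(x_i,t).
  ux, ut: first partial derivatives in x and t; utx, utxx: first and second
  x-derivatives of ut (one-sided at the boundary of e_i x [0,oo)).\<close>
definition strong_solution ::
  "'v set \<Rightarrow> nat set \<Rightarrow> (nat \<Rightarrow> 'v) \<Rightarrow> (nat \<Rightarrow> 'v) \<Rightarrow> (nat \<Rightarrow> real) \<Rightarrow>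
   (nat \<Rightarrow> real) \<Rightarrow> (nat \<Rightarrow> real) \<Rightarrow> (nat \<Rightarrow> real \<Rightarrow> real \<Rightarrow> real) \<Rightarrow> bool" where
  "strong_solution V E src tgt l a b u \<longleftrightarrow>
   (\<exists>ux ut utx utxx :: nat \<Rightarrow> real \<Rightarrow> real \<Rightarrow> real.
     (\<forall>i\<in>E.
        continuous_on ({0..l i} \<times> {0..}) (\<lambda>(x,t). u i x t) \<and>
        continuous_on ({0..l i} \<times> {0..}) (\<lambda>(x,t). ux i x t) \<and>
        continuous_on ({0..l i} \<times> {0..}) (\<lambda>(x,t). ut i x t) \<and>
        continuous_on ({0..l i} \<times> {0..}) (\<lambda>(x,t). utx i x t) \<and>
        continuous_on ({0..l i} \<times> {0..}) (\<lambda>(x,t). utxx i x t) \<and>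
        (\<forall>x\<in>{0..l i}. \<forall>t\<in>{0..}.
           ((\<lambda>y. u i y t) has_real_derivative ux i x t) (at x within {0..l i}) \<and>
           ((\<lambda>s. u i x s) has_real_derivative ut i x t) (at t within {0..}) \<and>
           ((\<lambda>y. ut i y t) has_real_derivative utx i x t) (at x within {0..l i}) \<and>
           ((\<lambda>y. utx i y t) has_real_derivative utxx i x t) (at x within {0..l i})) \<and>
        (\<forall>x\<in>{0..l i}. \<forall>t>0.
           ut i x t - a i * utxx i x t + b i * u i x t * ux i x t = 0)) \<and>
     (\<forall>v\<in>V. \<forall>t\<ge>0. \<forall>j\<in>incident E src tgt v. \<forall>h\<in>incident E src tgt v.
        u j (eps tgt l v j) t = u h (eps tgt l v h) t) \<and>
     (\<forall>v\<in>ramif V E src tgt. \<forall>t\<ge>0.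
        (\<Sum>j\<in>incident E src tgt v. iota src tgt v j * a j * ux j (eps tgt l v j) t) = 0))"

definition profile :: "real \<Rightarrow> real \<Rightarrow> real \<Rightarrow> real \<Rightarrow> real" where
  "profile a b c z = 6 * c / b * (1 / (1 + cosh (z / sqrt a)))"

end

theory Submission
  imports Defs
begin

text \<open>On each edge the function is a travelling wave \<open>\<phi>(x - c t + \<tau>)\<close>, and the BBM equation
  reduces to the profile ODE \<open>a c \<phi>''' = c \<phi>' - b \<phi> \<phi>'\<close>; after the rescaling \<open>s = z / \<surd>a\<close> this
  is \<open>g''' = (1 - 6 g) g'\<close> for \<open>g s = 1 / (1 + cosh s)\<close>, a direct computation. At a ramification
  vertex the compatibility conditions make \<open>c\<^sub>i / b\<^sub>i\<close> and the phase \<open>(x\<^sub>i - c\<^sub>i t + \<tau>\<^sub>i) / \<surd>a\<^sub>i\<close>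
  independent of the edge, which gives continuity, and make the flux \<open>a\<^sub>i \<phi>\<^sub>i'\<close> proportional
  to \<open>b\<^sub>i\<close>, so the Kirchhoff sum is a multiple of \<open>\<Sum>\<^sub>i \<iota>\<^sub>k\<^sub>i b\<^sub>i = 0\<close>.\<close>

lemma divide_power_cancel_left:
  fixes x e :: real
  assumes "e \<noteq> 0"
  shows "x * e ^ m / e ^ (m + n) = x / e ^ n"
  using assms by (simp add: power_add)

lemma one_plus_cosh_pos: "1 + cosh (s::real) > 0"
  using cosh_real_ge_1[of s] by linarith

definition hump :: "real \<Rightarrow> real" where
  "hump s = 1 / (1 + cosh s)"

definition hump_d1 :: "real \<Rightarrow> real" where
  "hump_d1 s = - sinh s / (1 + cosh s)^2"

definition hump_d2 :: "real \<Rightarrow> real" where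
  "hump_d2 s = (cosh s - 2) / (1 + cosh s)^2"

definition hump_d3 :: "real \<Rightarrow> real" where
  "hump_d3 s = sinh s * (5 - cosh s) / (1 + cosh s)^3"

lemma hump_has_derivative: "(hump has_real_derivative hump_d1 s) (at s)"
  unfolding hump_def[abs_def] hump_d1_def
  using one_plus_cosh_pos[of s]
  by (auto intro!: derivative_eq_intros simp: power2_eq_square)

lemma hump_d1_has_derivative: "(hump_d1 has_real_derivative hump_d2 s) (at s)"
proof -
  define C S where "C = cosh s" and "S = sinh s"
  have pos: "1 + C > 0" using one_plus_cosh_pos[of s] by (simp add: C_def)
  have "- (C * (1 + C)^2 - S * (2 * (S * (1 + C)))) = (C - 2) * (1 + C)^2"
    using cosh_square_eq[of s] by (simp add: C_def S_def power2_eq_square algebra_simps)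
  then have "- ((C * (1 + C)^2 - S * (2 * (S * (1 + C)))) / (1 + C)^(2 + 2))
      = (C - 2) * (1 + C)^2 / (1 + C)^(2 + 2)"
    by (simp only: minus_divide_left)
  also have "\<dots> = (C - 2) / (1 + C)^2"
    using pos by (intro divide_power_cancel_left) simp
  finally show ?thesis
    unfolding hump_d1_def[abs_def] hump_d2_def using pos
    by (auto intro!: derivative_eq_intros simp: C_def S_def)
qed

lemma hump_d2_has_derivative: "(hump_d2 has_real_derivative hump_d3 s) (at s)"
proof -
  define C S where "C = cosh s" and "S = sinh s"
  have pos: "1 + C > 0" using one_plus_cosh_pos[of s] by (simp add: C_def)
  have "(S * (1 + C)^2 - (C - 2) * (2 * (S * (1 + C)))) / (1 + C)^(1 + 3) = S * (5 - C) * (1 + C)^1 / (1 + C)^(1 + 3)"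
    by (simp add: power2_eq_square algebra_simps)
  also have "\<dots> = S * (5 - C) / (1 + C)^3"
    using pos by (intro divide_power_cancel_left) simp
  finally show ?thesis
    unfolding hump_d2_def[abs_def] hump_d3_def using pos
    by (auto intro!: derivative_eq_intros simp: C_def S_def)
qed

lemma continuous_hump_d3: "isCont hump_d3 s"
  unfolding hump_d3_def[abs_def] using one_plus_cosh_pos[of s]
  by (intro continuous_intros) simp

lemma hump_ode: "hump_d3 s = (1 - 6 * hump s) * hump_d1 s"
proof -
  define C S where "C = cosh s" and "S = sinh s"
  have pos: "1 + C > 0" using one_plus_cosh_pos[of s] by (simp add: C_def)
  have "(1 - 6 / (1 + C)) * (- S / (1 + C)^2) = ((C - 5) / (1 + C)) * (- S / (1 + C)^2)"
    using pos by (simp add: field_simps)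
  also have "\<dots> = ((C - 5) * (- S)) / ((1 + C) * (1 + C)^2)"
    by (rule times_divide_times_eq)
  also have "\<dots> = S * (5 - C) / (1 + C)^3"
    by (simp add: power3_eq_cube power2_eq_square algebra_simps)
  finally show ?thesis
    by (simp add: hump_def hump_d1_def hump_d3_def C_def S_def)
qed

definition profile_d1 :: "real \<Rightarrow> real \<Rightarrow> real \<Rightarrow> real \<Rightarrow> real" where
  "profile_d1 a b c z = 6 * (c / b) / sqrt a * hump_d1 (z / sqrt a)"

definition profile_d2 :: "real \<Rightarrow> real \<Rightarrow> real \<Rightarrow> real \<Rightarrow> real" where
  "profile_d2 a b c z = 6 * (c / b) / sqrt a ^ 2 * hump_d2 (z / sqrt a)"

definition profile_d3 :: "real \<Rightarrow> real \<Rightarrow> real \<Rightarrow> real \<Rightarrow> real" where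
  "profile_d3 a b c z = 6 * (c / b) / sqrt a ^ 3 * hump_d3 (z / sqrt a)"

lemma profile_eq_hump: "profile a b c z = 6 * (c / b) * hump (z / sqrt a)"
  by (simp add: profile_def hump_def)

lemma rescaled_has_derivative:
  assumes "\<And>s. (f has_real_derivative f' s) (at s)"
  shows "((\<lambda>z. k * f (z / q)) has_real_derivative k / q * f' (z / q)) (at z)"
  using DERIV_cmult[OF DERIV_chain2[OF assms DERIV_cdivide[OF DERIV_ident, of q]], of k]
  by simp

lemma profile_has_derivative: "(profile a b c has_real_derivative profile_d1 a b c z) (at z)"
  unfolding profile_eq_hump[abs_def] profile_d1_def
  by (rule rescaled_has_derivative[OF hump_has_derivative])

lemma profile_d1_has_derivative: "(profile_d1 a b c has_real_derivative profile_d2 a b c z) (at z)"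
  unfolding profile_d1_def[abs_def] profile_d2_def
  by (rule DERIV_cong[OF rescaled_has_derivative[OF hump_d1_has_derivative]])
     (simp add: power2_eq_square)

lemma profile_d2_has_derivative: "(profile_d2 a b c has_real_derivative profile_d3 a b c z) (at z)"
  unfolding profile_d2_def[abs_def] profile_d3_def
  by (rule DERIV_cong[OF rescaled_has_derivative[OF hump_d2_has_derivative]])
     (simp add: power2_eq_square power3_eq_cube)

lemma continuous_profile_d3: "isCont (profile_d3 a b c) z"
proof -
  have "isCont (\<lambda>z. z / sqrt a) z"
    by (simp add: divide_inverse)
  then show ?thesis
    unfolding profile_d3_def[abs_def]
    by (intro continuous_mult continuous_const isCont_o2[OF _ continuous_hump_d3])
qed

lemma profile_ode:
  assumes "a > 0" and "b \<noteq> 0"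
  shows "a * c * profile_d3 a b c z = c * profile_d1 a b c z - b * profile a b c z * profile_d1 a b c z"
proof -
  define q s where "q = sqrt a" and "s = z / q"
  have "a = q^2" and "q > 0" using assms(1) by (simp_all add: q_def)
  then show ?thesis
    using assms(2) hump_ode[of s]
    by (simp add: profile_eq_hump profile_d1_def profile_d3_def flip: q_def s_def)
       (simp add: field_simps power2_eq_square power3_eq_cube)
qed

definition bbm_edge_solution ::
  "real \<Rightarrow> real \<Rightarrow> real \<Rightarrow> (real \<Rightarrow> real \<Rightarrow> real) \<Rightarrow> (real \<Rightarrow> real \<Rightarrow> real) \<Rightarrow>
   (real \<Rightarrow> real \<Rightarrow> real) \<Rightarrow> (real \<Rightarrow> real \<Rightarrow> real) \<Rightarrow> (real \<Rightarrow> real \<Rightarrow> real) \<Rightarrow> bool" where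
  "bbm_edge_solution a b L u ux ut utx utxx \<longleftrightarrow>
     continuous_on ({0..L} \<times> {0..}) (\<lambda>(x,t). u x t) \<and>
     continuous_on ({0..L} \<times> {0..}) (\<lambda>(x,t). ux x t) \<and>
     continuous_on ({0..L} \<times> {0..}) (\<lambda>(x,t). ut x t) \<and>
     continuous_on ({0..L} \<times> {0..}) (\<lambda>(x,t). utx x t) \<and>
     continuous_on ({0..L} \<times> {0..}) (\<lambda>(x,t). utxx x t) \<and>
     (\<forall>x\<in>{0..L}. \<forall>t\<in>{0..}.
        ((\<lambda>y. u y t) has_real_derivative ux x t) (at x within {0..L}) \<and>
        ((\<lambda>s. u x s) has_real_derivative ut x t) (at t within {0..}) \<and>
        ((\<lambda>y. ut y t) has_real_derivative utx x t) (at x within {0..L}) \<and>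
        ((\<lambda>y. utx y t) has_real_derivative utxx x t) (at x within {0..L})) \<and>
     (\<forall>x\<in>{0..L}. \<forall>t>0. ut x t - a * utxx x t + b * u x t * ux x t = 0)"

lemma strong_solutionI:
  assumes "\<forall>i\<in>E. bbm_edge_solution (a i) (b i) (l i) (u i) (ux i) (ut i) (utx i) (utxx i)"
    and "\<forall>v\<in>V. \<forall>t\<ge>0. \<forall>j\<in>incident E src tgt v. \<forall>h\<in>incident E src tgt v.
           u j (eps tgt l v j) t = u h (eps tgt l v h) t"
    and "\<forall>v\<in>ramif V E src tgt. \<forall>t\<ge>0.
           (\<Sum>j\<in>incident E src tgt v. iota src tgt v j * a j * ux j (eps tgt l v j) t) = 0"
  shows "strong_solution V E src tgt l a b u"
  using assms unfolding strong_solution_def bbm_edge_solution_def by blast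

lemma continuous_on_travelling_wave:
  fixes f :: "real \<Rightarrow> real"
  assumes "\<And>z. isCont f z"
  shows "continuous_on S (\<lambda>(x, t). f (x - c * t + \<tau>))"
proof -
  have "continuous_on UNIV f"
    using assms by (simp add: continuous_at_imp_continuous_on)
  moreover have "continuous_on S (\<lambda>p :: real \<times> real. fst p - c * snd p + \<tau>)"
    by (intro continuous_intros)
  ultimately show ?thesis
    unfolding case_prod_beta' by (rule continuous_on_compose2) simp
qed

lemma travelling_wave_has_derivative:
  fixes f :: "real \<Rightarrow> real"
  assumes "\<And>z. (f has_real_derivative f' z) (at z)"
  shows "((\<lambda>y. f (y - c * t + \<tau>)) has_real_derivative f' (x - c * t + \<tau>)) (at x within S)"
    and "((\<lambda>s. f (x - c * s + \<tau>)) has_real_derivative - c * f' (x - c * t + \<tau>)) (at t within S)"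
proof -
  show "((\<lambda>y. f (y - c * t + \<tau>)) has_real_derivative f' (x - c * t + \<tau>)) (at x within S)"
    by (rule has_field_derivative_at_within, rule DERIV_cong[OF DERIV_chain2[OF assms]])
       (auto intro!: derivative_eq_intros)
  show "((\<lambda>s. f (x - c * s + \<tau>)) has_real_derivative - c * f' (x - c * t + \<tau>)) (at t within S)"
    by (rule has_field_derivative_at_within, rule DERIV_cong[OF DERIV_chain2[OF assms]])
       (auto intro!: derivative_eq_intros)
qed

lemma travelling_wave_bbm_edge_solution:
  fixes \<phi> \<phi>' \<phi>'' \<phi>''' :: "real \<Rightarrow> real"
  assumes d1: "\<And>z. (\<phi> has_real_derivative \<phi>' z) (at z)"
    and d2: "\<And>z. (\<phi>' has_real_derivative \<phi>'' z) (at z)"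
    and d3: "\<And>z. (\<phi>'' has_real_derivative \<phi>''' z) (at z)"
    and cont: "\<And>z. isCont \<phi>''' z"
    and ode: "\<And>z. a * c * \<phi>''' z = c * \<phi>' z - b * \<phi> z * \<phi>' z"
  shows "bbm_edge_solution a b L
    (\<lambda>x t. \<phi> (x - c * t + \<tau>)) (\<lambda>x t. \<phi>' (x - c * t + \<tau>)) (\<lambda>x t. - c * \<phi>' (x - c * t + \<tau>))
    (\<lambda>x t. - c * \<phi>'' (x - c * t + \<tau>)) (\<lambda>x t. - c * \<phi>''' (x - c * t + \<tau>))"
proof -
  have cont_derivs: "isCont \<phi> z" "isCont \<phi>' z" "isCont \<phi>'' z" for z
    using DERIV_isCont d1 d2 d3 by blast+
  have cont_wave: "continuous_on ({0..L} \<times> {0..}) (\<lambda>(x, t). k * f (x - c * t + \<tau>))"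
    if "\<And>z. isCont f z" for f :: "real \<Rightarrow> real" and k
  proof -
    have "isCont (\<lambda>z. k * f z) z" for z
      using that by (intro continuous_intros)
    then show ?thesis
      by (rule continuous_on_travelling_wave)
  qed
  have deriv_wave: "((\<lambda>y. k * f (y - c * t + \<tau>)) has_real_derivative k * f' (x - c * t + \<tau>))
      (at x within {0..L})"
    if "\<And>z. (f has_real_derivative f' z) (at z)" for f f' :: "real \<Rightarrow> real" and k x t
    using DERIV_cmult[OF travelling_wave_has_derivative(1)[OF that], of k] by simp
  have bbm: "a * (c * \<phi>''' z) - c * \<phi>' z + b * \<phi> z * \<phi>' z = 0" for z
    using ode[of z] by (simp add: algebra_simps)
  show ?thesis
    unfolding bbm_edge_solution_def
    using cont_wave[of \<phi> 1] cont_wave[of \<phi>' 1] cont_wave[of \<phi>' "- c"] cont_wave[of \<phi>'' "- c"]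
      cont_wave[of \<phi>''' "- c"] deriv_wave[OF d1, of 1] deriv_wave[OF d2, of "- c"] deriv_wave[OF d3, of "- c"]
      travelling_wave_has_derivative(2)[OF d1] cont_derivs cont
    by (simp add: bbm)
qed

context
  fixes ai aj bi bj ci cj \<tau>i \<tau>j ei ej :: real
  assumes ai: "ai > 0" and aj: "aj > 0" and bj: "bj \<noteq> 0"
    and scale: "sqrt (ai / aj) = bi / bj"
    and speed: "ci = sqrt (ai / aj) * cj"
    and phase: "(\<tau>i + ei) / sqrt ai = (\<tau>j + ej) / sqrt aj"
begin

lemma matched_ratios: "bi = sqrt ai / sqrt aj * bj" "ci = sqrt ai / sqrt aj * cj"
  using scale speed bj by (simp_all add: real_sqrt_divide field_simps)

lemma matched_amplitude: "ci / bi = cj / bj"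
  using matched_ratios ai aj by simp

lemma matched_phase: "(ei - ci * t + \<tau>i) / sqrt ai = (ej - cj * t + \<tau>j) / sqrt aj"
proof -
  have "ci * t / sqrt ai = cj * t / sqrt aj"
    using matched_ratios(2) ai aj by simp
  then show ?thesis
    using phase by (simp add: diff_divide_distrib add_divide_distrib algebra_simps)
qed

lemma matched_profiles: "profile ai bi ci (ei - ci * t + \<tau>i) = profile aj bj cj (ej - cj * t + \<tau>j)"
  unfolding profile_eq_hump matched_amplitude matched_phase ..

lemma matched_fluxes:
  "ai * profile_d1 ai bi ci (ei - ci * t + \<tau>i) = bi / bj * (aj * profile_d1 aj bj cj (ej - cj * t + \<tau>j))"
proof -
  define K G where "K = 6 * (cj / bj)" and "G = hump_d1 ((ej - cj * t + \<tau>j) / sqrt aj)"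
  have "ai * profile_d1 ai bi ci (ei - ci * t + \<tau>i) = K * G * (ai / sqrt ai)"
    unfolding profile_d1_def matched_amplitude matched_phase K_def G_def by simp
  also have "ai / sqrt ai = bi / bj * (aj / sqrt aj)"
    using matched_ratios(1) ai aj bj by (simp add: real_div_sqrt)
  also have "K * G * (bi / bj * (aj / sqrt aj)) = bi / bj * (aj * profile_d1 aj bj cj (ej - cj * t + \<tau>j))"
    unfolding profile_d1_def K_def G_def by simp
  finally show ?thesis .
qed

end

lemma matched_profile_waves_continuous:
  assumes fin: "\<forall>v\<in>V. finite (incident E src tgt v)"
    and apos: "\<forall>i\<in>E. a i > 0" and bnz: "\<forall>i\<in>E. b i \<noteq> 0"
    and scale: "\<forall>v\<in>ramif V E src tgt. \<forall>i\<in>incident E src tgt v. \<forall>j\<in>incident E src tgt v.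
                  sqrt (a i / a j) = b i / b j"
    and speed: "\<forall>v\<in>ramif V E src tgt. \<forall>i\<in>incident E src tgt v. \<forall>j\<in>incident E src tgt v.
                  c i = sqrt (a i / a j) * c j"
    and phase: "\<forall>v\<in>ramif V E src tgt. \<forall>i\<in>incident E src tgt v. \<forall>j\<in>incident E src tgt v.
                  (\<tau> i + eps tgt l v i) / sqrt (a i) = (\<tau> j + eps tgt l v j) / sqrt (a j)"
  shows "\<forall>v\<in>V. \<forall>t\<ge>0. \<forall>i\<in>incident E src tgt v. \<forall>j\<in>incident E src tgt v.
           profile (a i) (b i) (c i) (eps tgt l v i - c i * t + \<tau> i) =
           profile (a j) (b j) (c j) (eps tgt l v j - c j * t + \<tau> j)"
proof (intro ballI allI impI)
  fix v t i j
  assume v: "v \<in> V" and i: "i \<in> incident E src tgt v" and j: "j \<in> incident E src tgt v"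
  show "profile (a i) (b i) (c i) (eps tgt l v i - c i * t + \<tau> i) =
        profile (a j) (b j) (c j) (eps tgt l v j - c j * t + \<tau> j)"
  proof (cases "v \<in> ramif V E src tgt")
    case True
    have "i \<in> E" "j \<in> E" using i j by (simp_all add: incident_def)
    then show ?thesis
      by (intro matched_profiles[OF apos[rule_format] apos[rule_format] bnz[rule_format]
            scale[rule_format, OF True i j] speed[rule_format, OF True i j] phase[rule_format, OF True i j]])
  next
    case False
    then have "card (incident E src tgt v) \<le> Suc 0"
      using v by (simp add: ramif_def)
    with i j fin v have "i = j"
      using card_le_Suc0_iff_eq by blast
    then show ?thesis by simp
  qed
qed

lemma matched_profile_waves_kirchhoff:
  assumes apos: "\<forall>i\<in>E. a i > 0" and bnz: "\<forall>i\<in>E. b i \<noteq> 0"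
    and scale: "\<forall>v\<in>ramif V E src tgt. \<forall>i\<in>incident E src tgt v. \<forall>j\<in>incident E src tgt v.
                  sqrt (a i / a j) = b i / b j"
    and speed: "\<forall>v\<in>ramif V E src tgt. \<forall>i\<in>incident E src tgt v. \<forall>j\<in>incident E src tgt v.
                  c i = sqrt (a i / a j) * c j"
    and phase: "\<forall>v\<in>ramif V E src tgt. \<forall>i\<in>incident E src tgt v. \<forall>j\<in>incident E src tgt v.
                  (\<tau> i + eps tgt l v i) / sqrt (a i) = (\<tau> j + eps tgt l v j) / sqrt (a j)"
    and bsum: "\<forall>v\<in>ramif V E src tgt. (\<Sum>i\<in>incident E src tgt v. iota src tgt v i * b i) = 0"
  shows "\<forall>v\<in>ramif V E src tgt. \<forall>t\<ge>0. (\<Sum>i\<in>incident E src tgt v.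
           iota src tgt v i * a i * profile_d1 (a i) (b i) (c i) (eps tgt l v i - c i * t + \<tau> i)) = 0"
proof (intro ballI allI impI)
  fix v t
  assume v: "v \<in> ramif V E src tgt"
  let ?N = "incident E src tgt v"
  let ?flux = "\<lambda>i. a i * profile_d1 (a i) (b i) (c i) (eps tgt l v i - c i * t + \<tau> i)"
  show "(\<Sum>i\<in>?N. iota src tgt v i * a i * profile_d1 (a i) (b i) (c i) (eps tgt l v i - c i * t + \<tau> i)) = 0"
  proof (cases "?N = {}")
    case False
    then obtain j where j: "j \<in> ?N" by blast
    define M where "M = ?flux j / b j"
    have flux: "?flux i = b i * M" if i: "i \<in> ?N" for i
    proof -
      have "i \<in> E" "j \<in> E" using i j by (simp_all add: incident_def)
      then have "?flux i = b i / b j * ?flux j"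
        by (intro matched_fluxes[OF apos[rule_format] apos[rule_format] bnz[rule_format]
              scale[rule_format, OF v i j] speed[rule_format, OF v i j] phase[rule_format, OF v i j]])
      then show ?thesis by (simp add: M_def)
    qed
    have "(\<Sum>i\<in>?N. iota src tgt v i * a i * profile_d1 (a i) (b i) (c i) (eps tgt l v i - c i * t + \<tau> i))
        = (\<Sum>i\<in>?N. iota src tgt v i * b i * M)"
      using flux by (intro sum.cong) (simp_all add: mult.assoc)
    also have "\<dots> = (\<Sum>i\<in>?N. iota src tgt v i * b i) * M"
      by (simp add: sum_distrib_right)
    finally show ?thesis
      using bsum v by simp
  qed simp
qed

theorem theorem6p1:
  fixes V :: "'v set" and E :: "nat set" and src tgt :: "nat \<Rightarrow> 'v"
    and l a b c \<tau> :: "nat \<Rightarrow> real"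
  assumes tree: "tree_network V E src tgt l"
    and e0: "0 \<in> E"
    and apos: "\<forall>i\<in>E. a i > 0"
    and bnz: "\<forall>i\<in>E. b i \<noteq> 0"
    and ab: "\<forall>v\<in>ramif V E src tgt. \<forall>i\<in>incident E src tgt v. \<forall>j\<in>incident E src tgt v.
               sqrt (a i / a j) = b i / b j \<and> b i / b j > 0"
    and bsum: "\<forall>v\<in>ramif V E src tgt. (\<Sum>i\<in>incident E src tgt v. iota src tgt v i * b i) = 0"
    and c0: "c 0 > 0"
    and cdef: "\<forall>v\<in>ramif V E src tgt. \<forall>i\<in>incident E src tgt v. \<forall>j\<in>incident E src tgt v.
               c i = sqrt (a i / a j) * c j"
    and tau0: "\<tau> 0 = 0"
    and taudef: "\<forall>v\<in>ramif V E src tgt. \<forall>i\<in>incident E src tgt v. \<forall>j\<in>incident E src tgt v.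
               (\<tau> i + eps tgt l v i) / sqrt (a i) = (\<tau> j + eps tgt l v j) / sqrt (a j)"
  shows "strong_solution V E src tgt l a b
           (\<lambda>i x t. profile (a i) (b i) (c i) (x - c i * t + \<tau> i))"
proof -
  have fin: "\<forall>v\<in>V. finite (incident E src tgt v)"
    using tree by (simp add: tree_network_def)
  have scale: "\<forall>v\<in>ramif V E src tgt. \<forall>i\<in>incident E src tgt v. \<forall>j\<in>incident E src tgt v.
      sqrt (a i / a j) = b i / b j"
    using ab by blast
  have edges: "\<forall>i\<in>E. bbm_edge_solution (a i) (b i) (l i)
      (\<lambda>x t. profile (a i) (b i) (c i) (x - c i * t + \<tau> i))
      (\<lambda>x t. profile_d1 (a i) (b i) (c i) (x - c i * t + \<tau> i))
      (\<lambda>x t. - c i * profile_d1 (a i) (b i) (c i) (x - c i * t + \<tau> i))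
      (\<lambda>x t. - c i * profile_d2 (a i) (b i) (c i) (x - c i * t + \<tau> i))
      (\<lambda>x t. - c i * profile_d3 (a i) (b i) (c i) (x - c i * t + \<tau> i))"
    (is "\<forall>i\<in>E. ?edge i")
  proof
    fix i assume "i \<in> E"
    with apos bnz have "a i > 0" "b i \<noteq> 0" by auto
    then show "?edge i"
      by (intro travelling_wave_bbm_edge_solution profile_has_derivative profile_d1_has_derivative
          profile_d2_has_derivative continuous_profile_d3 profile_ode)
  qed
  show ?thesis
    by (rule strong_solutionI[OF edges
          matched_profile_waves_continuous[OF fin apos bnz scale cdef taudef]
          matched_profile_waves_kirchhoff[OF apos bnz scale cdef taudef bsum]])
qed

end
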